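(* Let $G=C_2\times C_2\times C_2=\langle n\rangle\times\langle b\rangle\times\langle c\rangle$ and $N=\langle n\rangle$. Let $U=\mathbb{Z}_2^{11}$ (column vectors) with $n,b,c$ acting by the following matrices $A_n,A_b,A_c$ respectively (rows listed top to bottom): $A_n$: (1,0,0,0,0,0,0,0,0,0,0); (0,1,0,0,0,0,0,0,0,0,0); (0,0,1,0,0,0,0,0,0,0,0); (0,0,0,1,0,0,0,0,0,0,0); (0,1,0,0,1,0,0,1,1,1,1); (0,1,0,0,0,1,0,1,1,1,1); (0,−1,0,0,0,0,1,−1,−1,−1,−1); (0,−1,0,0,0,0,0,−1,0,0,0); (0,0,−1,1,0,0,0,0,−1,0,0); (0,−1,1,0,0,0,0,0,0,−1,0); (0,0,0,−1,0,0,0,0,0,0,−1). $A_b$: (1,0,0,0,0,0,0,0,0,0,0); (0,1,0,0,0,0,0,0,0,0,0); (0,0,1,0,0,0,0,0,0,0,0); (0,0,0,1,0,0,0,0,0,0,0); (0,0,0,1,0,1,0,0,0,1,1); (0,1,−1,0,1,0,0,0,0,1,1); (1,0,1,−1,−1,−1,−1,0,0,−1,−1); (0,0,0,0,0,0,0,1,0,0,0); (0,0,0,0,0,0,0,0,1,0,0); (0,−1,1,0,0,0,0,0,0,−1,0); (0,0,0,−1,0,0,0,0,0,0,−1). $A_c$: (1,0,0,0,0,0,0,0,0,0,0); (0,1,0,0,0,0,0,0,0,0,0); (0,0,1,0,0,0,0,0,0,0,0); (0,0,0,1,0,0,0,0,0,0,0); (0,0,0,1,0,0,1,−1,0,−1,0);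 (1,1,0,0,−1,−1,−1,−1,0,−1,0); (0,0,0,−1,1,0,0,1,0,1,0); (0,0,0,0,0,0,0,1,0,0,0); (0,0,−1,1,0,0,0,0,−1,0,0); (0,0,0,0,0,0,0,0,0,1,0); (0,0,0,−1,0,0,0,0,0,0,−1). Then this defines a $\mathbb{Z}_2G$-lattice $U$ such that $U^N$ and $U_N$ are permutation $\mathbb{Z}_2[G/N]$-modules, but $U$ is not a permutation $\mathbb{Z}_2G$-module.
   Context: A $\mathbb{Z}_2G$-lattice is a $\mathbb{Z}_2G$-module free of finite rank over the $2$-adic integers $\mathbb{Z}_2$; it is a permutation module if it has a $\mathbb{Z}_2$-basis that is set-wise preserved by the group. For a module $U$, $U^N=\{u\in U:nu=u\}$ and $U_N=U/I_NU$, where $I_N$ is the augmentation ideal of $\mathbb{Z}_2N$ (so $U_N=U/(1-n)U$); both are $\mathbb{Z}_2[G/N]$-modules. *)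

theory Defs
  imports "HOL-Analysis.Analysis" "HOL-Library.Numeral_Type" "HOL-Number_Theory.Cong"
begin

text \<open>An element of Z_2 is represented by a compatible sequence of integers
  (x_k), with x_m congruent to x_k modulo 2^k whenever k <= m; two such sequences
  are identified when they agree modulo 2^k in every coordinate k.\<close>

definition compat2 :: "(nat \<Rightarrow> int) \<Rightarrow> bool" where
  "compat2 f \<longleftrightarrow> (\<forall>k m. k \<le> m \<longrightarrow> [f m = f k] (mod 2 ^ k))"

definition padic2_rel :: "(nat \<Rightarrow> int) \<Rightarrow> (nat \<Rightarrow> int) \<Rightarrow> bool" where
  "padic2_rel f g \<longleftrightarrow> compat2 f \<and> compat2 g \<and> (\<forall>k. [f k = g k] (mod 2 ^ k))"

lemma padic2_rel_part_equivp: "part_equivp padic2_rel"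
proof (rule part_equivpI)
  show "\<exists>x. padic2_rel x x"
    by (rule exI[of _ "\<lambda>k. 0"]) (simp add: padic2_rel_def compat2_def)
  show "symp padic2_rel"
    by (auto simp: symp_def padic2_rel_def cong_sym)
  show "transp padic2_rel"
    by (auto simp: transp_def padic2_rel_def intro: cong_trans)
qed

quotient_type padic2 = "nat \<Rightarrow> int" / partial: padic2_rel
  by (rule padic2_rel_part_equivp)

lemma compat2_const: "compat2 (\<lambda>k. c)"
  by (simp add: compat2_def)

lemma compat2_add: "compat2 f \<Longrightarrow> compat2 g \<Longrightarrow> compat2 (\<lambda>k. f k + g k)"
  by (auto simp: compat2_def intro: cong_add)

lemma compat2_mult: "compat2 f \<Longrightarrow> compat2 g \<Longrightarrow> compat2 (\<lambda>k. f k * g k)"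
  by (auto simp: compat2_def intro: cong_mult)

lemma compat2_uminus: "compat2 f \<Longrightarrow> compat2 (\<lambda>k. - f k)"
  by (auto simp: compat2_def intro: cong_minus_minus_iff[THEN iffD2])

lemma compat2_diff: "compat2 f \<Longrightarrow> compat2 g \<Longrightarrow> compat2 (\<lambda>k. f k - g k)"
  by (auto simp: compat2_def intro: cong_diff)

instantiation padic2 :: comm_ring_1
begin

lift_definition zero_padic2 :: padic2 is "\<lambda>k. 0"
  by (simp add: padic2_rel_def compat2_const)

lift_definition one_padic2 :: padic2 is "\<lambda>k. 1"
  by (simp add: padic2_rel_def compat2_const)

lift_definition plus_padic2 :: "padic2 \<Rightarrow> padic2 \<Rightarrow> padic2" is "\<lambda>f g k. f k + g k"
  by (auto simp: padic2_rel_def compat2_add intro: cong_add)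

lift_definition times_padic2 :: "padic2 \<Rightarrow> padic2 \<Rightarrow> padic2" is "\<lambda>f g k. f k * g k"
  by (auto simp: padic2_rel_def compat2_mult intro: cong_mult)

lift_definition uminus_padic2 :: "padic2 \<Rightarrow> padic2" is "\<lambda>f k. - f k"
  by (auto simp: padic2_rel_def compat2_uminus intro: cong_minus_minus_iff[THEN iffD2])

lift_definition minus_padic2 :: "padic2 \<Rightarrow> padic2 \<Rightarrow> padic2" is "\<lambda>f g k. f k - g k"
  by (auto simp: padic2_rel_def compat2_diff intro: cong_diff)

instance
proof
  fix a b c :: padic2
  show "a + b + c = a + (b + c)"
    by transfer (auto simp: padic2_rel_def compat2_add add.assoc)
  show "a + b = b + a"
    by transfer (auto simp: padic2_rel_def compat2_add add.commute)
  show "0 + a = a"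
    by transfer (auto simp: padic2_rel_def)
  show "- a + a = 0"
    by transfer (auto simp: padic2_rel_def compat2_add compat2_uminus compat2_const)
  show "a - b = a + - b"
    by transfer (auto simp: padic2_rel_def compat2_add compat2_diff compat2_uminus)
  show "a * b * c = a * (b * c)"
    by transfer (auto simp: padic2_rel_def compat2_mult mult.assoc)
  show "a * b = b * a"
    by transfer (auto simp: padic2_rel_def compat2_mult mult.commute)
  show "1 * a = a"
    by transfer (auto simp: padic2_rel_def)
  show "(a + b) * c = a * c + b * c"
    by transfer (auto simp: padic2_rel_def compat2_mult compat2_add distrib_right)
  show "(0::padic2) \<noteq> 1"
  proof transfer
    have "\<not> [0 = 1] (mod (2::int) ^ 1)" by (simp add: cong_def)
    then show "\<not> padic2_rel (\<lambda>k. 0) (\<lambda>k. 1)" unfolding padic2_rel_def by blast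
  qed
qed

end

definition intmat :: "int list list \<Rightarrow> 'a::ring_1 ^ 'n::{finite,one,plus} ^ 'm::{finite,one,plus}" where
  "intmat L = vector (map (\<lambda>r. vector (map of_int r)) L)"

definition lincombs :: "('a::comm_ring_1 ^ 'n) set \<Rightarrow> ('a ^ 'n) set" where
  "lincombs B = {x. \<exists>S c. finite S \<and> S \<subseteq> B \<and> x = (\<Sum>v\<in>S. c v *s v)}"

text \<open>perm_basis Gs M W B: the classes modulo the submodule W of the
  (finite) set B of elements of the module M form a Z_2-basis of M/W (they span M
  modulo W and are linearly independent modulo W), and this set of classes is
  set-wise preserved by every map in Gs.  With W = {0} this is just a Z_2-basis
  of M set-wise preserved by Gs.\<close>
definition perm_basis :: "(('a::comm_ring_1 ^ 'n) \<Rightarrow> ('a ^ 'n)) set \<Rightarrow> ('a ^ 'n) set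
    \<Rightarrow> ('a ^ 'n) set \<Rightarrow> ('a ^ 'n) set \<Rightarrow> bool" where
  "perm_basis Gs M W B \<longleftrightarrow>
     finite B \<and> B \<subseteq> M \<and>
     (\<forall>x\<in>M. \<exists>y\<in>lincombs B. x - y \<in> W) \<and>
     (\<forall>S c. finite S \<and> S \<subseteq> B \<and> (\<Sum>v\<in>S. c v *s v) \<in> W \<longrightarrow> (\<forall>v\<in>S. c v = 0)) \<and>
     (\<forall>g\<in>Gs. \<forall>v\<in>B. \<exists>w\<in>B. g v - w \<in> W)"

definition is_perm_module :: "(('a::comm_ring_1 ^ 'n) \<Rightarrow> ('a ^ 'n)) set \<Rightarrow> ('a ^ 'n) set
    \<Rightarrow> ('a ^ 'n) set \<Rightarrow> bool" where
  "is_perm_module Gs M W \<longleftrightarrow> (\<exists>B. perm_basis Gs M W B)"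

definition A_n :: "padic2 ^ 11 ^ 11" where
  "A_n = intmat
    [[1,0,0,0,0,0,0,0,0,0,0],
     [0,1,0,0,0,0,0,0,0,0,0],
     [0,0,1,0,0,0,0,0,0,0,0],
     [0,0,0,1,0,0,0,0,0,0,0],
     [0,1,0,0,1,0,0,1,1,1,1],
     [0,1,0,0,0,1,0,1,1,1,1],
     [0,-1,0,0,0,0,1,-1,-1,-1,-1],
     [0,-1,0,0,0,0,0,-1,0,0,0],
     [0,0,-1,1,0,0,0,0,-1,0,0],
     [0,-1,1,0,0,0,0,0,0,-1,0],
     [0,0,0,-1,0,0,0,0,0,0,-1]]"

definition A_b :: "padic2 ^ 11 ^ 11" where
  "A_b = intmat
    [[1,0,0,0,0,0,0,0,0,0,0],
     [0,1,0,0,0,0,0,0,0,0,0],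
     [0,0,1,0,0,0,0,0,0,0,0],
     [0,0,0,1,0,0,0,0,0,0,0],
     [0,0,0,1,0,1,0,0,0,1,1],
     [0,1,-1,0,1,0,0,0,0,1,1],
     [1,0,1,-1,-1,-1,-1,0,0,-1,-1],
     [0,0,0,0,0,0,0,1,0,0,0],
     [0,0,0,0,0,0,0,0,1,0,0],
     [0,-1,1,0,0,0,0,0,0,-1,0],
     [0,0,0,-1,0,0,0,0,0,0,-1]]"

definition A_c :: "padic2 ^ 11 ^ 11" where
  "A_c = intmat
    [[1,0,0,0,0,0,0,0,0,0,0],
     [0,1,0,0,0,0,0,0,0,0,0],
     [0,0,1,0,0,0,0,0,0,0,0],
     [0,0,0,1,0,0,0,0,0,0,0],
     [0,0,0,1,0,0,1,-1,0,-1,0],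
     [1,1,0,0,-1,-1,-1,-1,0,-1,0],
     [0,0,0,-1,1,0,0,1,0,1,0],
     [0,0,0,0,0,0,0,1,0,0,0],
     [0,0,-1,1,0,0,0,0,-1,0,0],
     [0,0,0,0,0,0,0,0,0,1,0],
     [0,0,0,-1,0,0,0,0,0,0,-1]]"

text \<open>G = C_2 x C_2 x C_2, an element n^i b^j c^k recorded by its exponent triple
  (i,j,k) of booleans, acting on U = Z_2^11 via A_n^i A_b^j A_c^k.\<close>
definition rho :: "bool \<times> bool \<times> bool \<Rightarrow> padic2 ^ 11 ^ 11" where
  "rho g = (case g of (i, j, k) \<Rightarrow>
     (if i then A_n else mat 1) ** (if j then A_b else mat 1) ** (if k then A_c else mat 1))"

definition G_action :: "(padic2 ^ 11 \<Rightarrow> padic2 ^ 11) set" where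
  "G_action = {(\<lambda>u. rho g *v u) | g. True}"

definition U_fixed_N :: "(padic2 ^ 11) set" where
  "U_fixed_N = {u. A_n *v u = u}"

definition IN_U :: "(padic2 ^ 11) set" where
  "IN_U = {u - A_n *v u | u. True}"

end

theory Submission
  imports Defs
begin

text \<open>
  The two positive claims are certified by explicit integer matrices: seven columns that lie
  in U^N (resp. span U modulo (1 - n)U) and are permuted by the generators, together with
  rows reading off coordinates and a matrix witnessing that the resulting projection is the
  identity on U^N (resp. modulo (1 - n)U). All of this reduces to identities between integer
  matrices, checked by evaluation.

  Suppose U had a G-stable basis B. It has 11 elements, and the fixed points of an involution
  have the parity of the whole set, so the commuting involutions n, b, c have a common fixed
  point x0 in B. Since G permutes B and fixes x0, the x0-coordinate of (1 + n)(1 + b)(1 + c) z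
  is 8 times that of z. But for every G-fixed x0 an integer matrix identity exhibits 4 x0 as
  such a norm, and 4 is not divisible by 8 in Z_2.
\<close>

lift_definition padic2_of_int :: "int \<Rightarrow> padic2" is "\<lambda>a k. a"
  by (simp add: padic2_rel_def compat2_const)

lemma of_int_eq_padic2_of_int: "of_int a = padic2_of_int a"
proof (induction a rule: int_induct[where k = 0])
  case base
  show ?case by (simp, transfer) (simp add: padic2_rel_def compat2_const)
next
  case (step1 i)
  then show ?case by (simp, transfer) (simp add: padic2_rel_def compat2_const)
next
  case (step2 i)
  then show ?case by (simp, transfer) (simp add: padic2_rel_def compat2_const)
qed

lemma padic2_pow2_dvd_of_int:
  assumes "of_int (2 ^ k) dvd (of_int b :: padic2)"
  shows "(2::int) ^ k dvd b"
proof -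
  obtain z where "padic2_of_int b = padic2_of_int (2 ^ k) * z"
    using assms by (auto simp: of_int_eq_padic2_of_int)
  then have "\<exists>f. [b = 2 ^ k * f k] (mod 2 ^ k)"
    by transfer (auto simp: padic2_rel_def)
  then show ?thesis
    by (auto simp: cong_def)
qed

instance padic2 :: ring_char_0
proof
  show "inj (of_nat :: nat \<Rightarrow> padic2)"
  proof (rule injI)
    fix m n :: nat
    assume "of_nat m = (of_nat n :: padic2)"
    then have "of_int (int m - int n) = (0 :: padic2)"
      by (simp only: of_int_diff of_int_of_nat_eq diff_self)
    then have "(2::int) ^ (m + n) dvd int m - int n"
      by (intro padic2_pow2_dvd_of_int) simp
    moreover have "\<bar>int m - int n\<bar> < 2 ^ (m + n)"
    proof -
      have "int (m + n) < 2 ^ (m + n)"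
        by (metis less_exp of_nat_less_iff of_nat_numeral of_nat_power)
      then show ?thesis
        by linarith
    qed
    ultimately show "m = n"
      by (metis dvd_imp_le_int abs_of_nonneg eq_iff_diff_eq_0 of_nat_eq_iff not_le zero_le_power zero_le_numeral)
  qed
qed

interpretation vec_module: module "(*s) :: 'a::comm_ring_1 \<Rightarrow> 'a ^ 'n \<Rightarrow> 'a ^ 'n"
  by unfold_locales (simp_all add: vector_add_ldistrib vector_sadd_rdistrib vector_smult_assoc)

lemma matrix_vector_mult_module_hom:
  "module_hom (*s) (*s) ((*v) (A :: 'a::comm_ring_1 ^ 'n ^ 'm))"
  by unfold_locales
    (simp_all add: vec_eq_iff distrib_left sum.distrib matrix_vector_mult_def sum_distrib_left
      mult.left_commute)

lemma matrix_vector_mult_lincomb: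
  "(A :: 'a::comm_ring_1 ^ 'n ^ 'm) *v (\<Sum>v\<in>S. c v *s v) = (\<Sum>v\<in>S. c v *s (A *v v))"
  by (simp add: module_hom.sum[OF matrix_vector_mult_module_hom]
      module_hom.scale[OF matrix_vector_mult_module_hom])

lemma lincombs_eq_span: "lincombs B = vec_module.span B"
  by (auto simp: lincombs_def vec_module.span_explicit)

lemma perm_basis_zeroD:
  assumes "perm_basis Gs UNIV {0} B"
  shows "finite B" and "vec_module.independent B" and "vec_module.span B = UNIV"
    and "\<And>g v. g \<in> Gs \<Longrightarrow> v \<in> B \<Longrightarrow> g v \<in> B"
  using assms
  by (auto simp: perm_basis_def vec_module.independent_explicit_module simp flip: lincombs_eq_span)

context
  fixes B :: "('a::comm_ring_1 ^ 'n) set"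
  assumes finite_B: "finite B"
    and independent_B: "vec_module.independent B"
    and span_B: "vec_module.span B = UNIV"
begin

lemma representation_lincomb:
  assumes "b \<in> B"
  shows "vec_module.representation B (\<Sum>v\<in>B. f v *s v) b = f b"
proof -
  have "vec_module.representation B (\<Sum>v\<in>B. f v *s v) b
      = (\<Sum>v\<in>B. f v * vec_module.representation B v b)"
    by (simp add: vec_module.representation_sum vec_module.representation_scale independent_B span_B)
  also have "\<dots> = (\<Sum>v\<in>B. if v = b then f v else 0)"
    by (intro sum.cong) (simp_all add: vec_module.representation_basis independent_B)
  also have "\<dots> = f b"
    using assms finite_B by simp
  finally show ?thesis .
qed

lemma sum_representation: "(\<Sum>b\<in>B. vec_module.representation B x b *s b) = x"
  by (simp add: vec_module.sum_representation_eq independent_B span_B finite_B)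

lemma of_nat_card_basis: "of_nat (card B) = (of_nat CARD('n) :: 'a)"
proof -
  let ?r = "vec_module.representation B"
  have diag: "?r b b = (\<Sum>i\<in>UNIV. b $ i * ?r (axis i 1) b)" if "b \<in> B" for b
  proof -
    have "?r b b = ?r (\<Sum>i\<in>UNIV. b $ i *s axis i 1) b"
      by (simp add: basis_expansion)
    also have "\<dots> = (\<Sum>i\<in>UNIV. b $ i * ?r (axis i 1) b)"
      by (simp add: vec_module.representation_sum vec_module.representation_scale independent_B span_B)
    finally show ?thesis .
  qed
  have "of_nat (card B) = (\<Sum>b\<in>B. ?r b b)"
    by (simp add: vec_module.representation_basis independent_B)
  also have "\<dots> = (\<Sum>i\<in>UNIV. \<Sum>b\<in>B. ?r (axis i 1) b * b $ i)"
    by (simp add: diag sum.swap[of _ B] mult.commute)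
  also have "\<dots> = (\<Sum>i\<in>UNIV. (\<Sum>b\<in>B. ?r (axis i 1) b *s b) $ i)"
    by simp
  also have "\<dots> = of_nat CARD('n)"
    by (simp add: sum_representation)
  finally show ?thesis .
qed

lemma representation_matrix_vector_mult:
  assumes bij: "bij_betw ((*v) A) B B" and "w \<in> B"
  shows "vec_module.representation B (A *v y) (A *v w) = vec_module.representation B y w"
proof -
  let ?r = "vec_module.representation B y" and ?h = "inv_into B ((*v) A)"
  have "A *v y = (\<Sum>b\<in>B. ?r b *s (A *v b))"
    by (subst sum_representation[of y, symmetric]) (rule matrix_vector_mult_lincomb)
  also have "\<dots> = (\<Sum>b\<in>B. ?r (?h (A *v b)) *s (A *v b))"
    using bij by (intro sum.cong) (simp_all add: bij_betw_inv_into_left)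
  also have "\<dots> = (\<Sum>c\<in>B. ?r (?h c) *s c)"
    by (rule sum.reindex_bij_betw[OF bij])
  finally have "vec_module.representation B (A *v y) (A *v w) = ?r (?h (A *v w))"
    using assms by (simp add: representation_lincomb bij_betw_apply)
  then show ?thesis
    using assms by (simp add: bij_betw_inv_into_left)
qed

end

section \<open>Fixed points of commuting involutions\<close>

lemma odd_card_fixpoints_involution:
  assumes "finite S" and "\<And>x. x \<in> S \<Longrightarrow> f x \<in> S" and "\<And>x. x \<in> S \<Longrightarrow> f (f x) = x"
  shows "odd (card {x\<in>S. f x = x}) \<longleftrightarrow> odd (card S)"
  using assms
proof (induction "card S" arbitrary: S rule: less_induct)
  case less
  show ?case
  proof (cases "\<forall>x\<in>S. f x = x")
    case True
    then have "{x\<in>S. f x = x} = S"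
      by blast
    then show ?thesis
      by simp
  next
    case False
    then obtain x where x: "x \<in> S" "f x \<noteq> x"
      by blast
    define S' where "S' = S - {x, f x}"
    have pair: "{x, f x} \<subseteq> S" "card {x, f x} = 2"
      using x less.prems(2) by auto
    then have card_S: "card S = card S' + 2"
      using less.prems(1) card_mono[OF less.prems(1) pair(1)]
      unfolding S'_def by (simp add: card_Diff_subset finite_subset)
    have "f y \<in> S'" if "y \<in> S'" for y
      using that less.prems(2,3)[of y] less.prems(3)[of x] x(1) unfolding S'_def by auto
    moreover have "finite S'" and "\<And>y. y \<in> S' \<Longrightarrow> f (f y) = y"
      using less.prems(1,3) unfolding S'_def by auto
    ultimately have "odd (card {y\<in>S'. f y = y}) \<longleftrightarrow> odd (card S')"
      using less.hyps[of S'] card_S by simp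
    moreover have "{y\<in>S'. f y = y} = {y\<in>S. f y = y}"
      using x less.prems(3) unfolding S'_def by auto
    moreover have "odd (card S') \<longleftrightarrow> odd (card S)"
      using card_S by simp
    ultimately show ?thesis
      by simp
  qed
qed

lemma odd_card_common_fixpoints:
  assumes "finite F" and "finite S" and "odd (card S)"
    and maps: "\<And>f x. f \<in> F \<Longrightarrow> x \<in> S \<Longrightarrow> f x \<in> S"
    and involution: "\<And>f x. f \<in> F \<Longrightarrow> x \<in> S \<Longrightarrow> f (f x) = x"
    and commute: "\<And>f g x. f \<in> F \<Longrightarrow> g \<in> F \<Longrightarrow> x \<in> S \<Longrightarrow> f (g x) = g (f x)"
  shows "odd (card {x\<in>S. \<forall>f\<in>F. f x = x})"
  using assms(1) maps involution commute
proof (induction F rule: finite_induct)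
  case empty
  then show ?case
    using assms(3) by simp
next
  case (insert f F)
  let ?T = "{x\<in>S. \<forall>g\<in>F. g x = x}"
  have "f x \<in> ?T" if "x \<in> ?T" for x
  proof -
    have "g (f x) = f x" if "g \<in> F" for g
      using \<open>x \<in> ?T\<close> that insert.prems(3)[of g f x] by auto
    then show ?thesis
      using \<open>x \<in> ?T\<close> insert.prems(1)[of f x] by simp
  qed
  then have "odd (card {x\<in>?T. f x = x}) \<longleftrightarrow> odd (card ?T)"
    using assms(2) insert.prems by (intro odd_card_fixpoints_involution) auto
  moreover have "odd (card ?T)"
    using insert.IH insert.prems by blast
  moreover have "{x\<in>?T. f x = x} = {x\<in>S. \<forall>g\<in>insert f F. g x = x}"
    by auto
  ultimately show ?case
    by simp
qed

section \<open>Permutation bases from matrix certificates\<close>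

lemma column_matrix_mult: "column k (A ** B) = A *v column k B"
  by (simp add: column_def matrix_matrix_mult_def matrix_vector_mult_def vec_eq_iff)

lemma matrix_mult_commute_product:
  "A ** X = X ** A \<Longrightarrow> A ** Y = Y ** A \<Longrightarrow> A ** (X ** Y) = (X ** Y) ** A"
  by (metis matrix_mul_assoc)

lemma mat_vector_mult: "mat c *v x = c *s x"
  by (simp add: vec_eq_iff matrix_vector_mult_def mat_def if_distrib if_distribR cong del: if_weak_cong)

lemma matrix_vector_mult_sum_columns:
  fixes V :: "'a::comm_ring_1 ^ 'n ^ 'm"
  assumes "\<And>i k. k \<notin> K \<Longrightarrow> V $ i $ k = 0"
  shows "V *v y = (\<Sum>k\<in>K. y $ k *s column k V)"
proof -
  have "column k V = 0" if "k \<notin> K" for k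
    using assms that by (simp add: column_def vec_eq_iff)
  then show ?thesis
    unfolding matrix_mult_sum by (intro sum.mono_neutral_right) auto
qed

lemma dual_rows_coefficient:
  fixes V P :: "'a::comm_ring_1 ^ 'n ^ 'n"
  assumes dual: "\<And>j k. j \<in> K \<Longrightarrow> k \<in> K \<Longrightarrow> (P ** V) $ j $ k = (if j = k then 1 else 0)"
    and S: "S \<subseteq> (\<lambda>k. column k V) ` K" and j: "j \<in> K" "column j V \<in> S"
  shows "(P *v (\<Sum>v\<in>S. c v *s v)) $ j = c (column j V)"
proof -
  have coordinate: "(P *v column k V) $ j = (if column k V = column j V then 1 else 0)" if "k \<in> K" for k
  proof -
    have entry: "(P *v column i V) $ j = (P ** V) $ j $ i" for i
      unfolding column_matrix_mult[symmetric] by (simp add: column_def)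
    show ?thesis
    proof (cases "column k V = column j V")
      case True
      then show ?thesis
        using entry[of j] dual[OF j(1) j(1)] by simp
    next
      case False
      then have "j \<noteq> k"
        by blast
      then show ?thesis
        using False entry[of k] dual[OF j(1) that] by simp
    qed
  qed
  have "(P *v (\<Sum>v\<in>S. c v *s v)) $ j = (\<Sum>v\<in>S. if v = column j V then c v else 0)"
    unfolding matrix_vector_mult_lincomb sum_component using S
    by (intro sum.cong) (auto simp: coordinate)
  also have "\<dots> = c (column j V)"
    using j(2) by (simp add: sum.delta' finite_subset[OF S])
  finally show ?thesis .
qed

definition unit_columns_on :: "'n set \<Rightarrow> 'a::zero_neq_one ^ 'n ^ 'n \<Rightarrow> bool" where
  "unit_columns_on K X \<longleftrightarrow> (\<forall>k\<in>K. \<exists>l\<in>K. \<forall>j\<in>K. X $ j $ k = (if j = l then 1 else 0))"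

lemma matrix_vector_mult_unit_column:
  fixes V X :: "'a::comm_ring_1 ^ 'n ^ 'n"
  assumes "\<And>i k. k \<notin> K \<Longrightarrow> V $ i $ k = 0" and "unit_columns_on K X" and "k \<in> K"
  obtains l where "l \<in> K" and "V *v column k X = column l V"
proof -
  obtain l where l: "l \<in> K" "\<And>j. j \<in> K \<Longrightarrow> X $ j $ k = (if j = l then 1 else 0)"
    using assms(2,3) unfolding unit_columns_on_def by blast
  have "V *v column k X = (\<Sum>j\<in>K. column k X $ j *s column j V)"
    using assms(1) by (rule matrix_vector_mult_sum_columns)
  also have "\<dots> = (\<Sum>j\<in>K. if j = l then column j V else 0)"
    using l(2) by (intro sum.cong) (simp_all add: column_def)
  also have "\<dots> = column l V"
    using l(1) by simp
  finally show ?thesis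
    using l(1) that by blast
qed

lemma perm_basis_of_certificate:
  fixes V P :: "'a::comm_ring_1 ^ 'n ^ 'n"
  assumes zero_outside: "\<And>i k. k \<notin> K \<Longrightarrow> V $ i $ k = 0"
    and dual: "\<And>j k. j \<in> K \<Longrightarrow> k \<in> K \<Longrightarrow> (P ** V) $ j $ k = (if j = k then 1 else 0)"
    and columns: "\<And>k. k \<in> K \<Longrightarrow> column k V \<in> M"
    and coordinates_vanish: "\<And>w j. w \<in> W \<Longrightarrow> j \<in> K \<Longrightarrow> (P *v w) $ j = 0"
    and retraction: "\<And>x. x \<in> M \<Longrightarrow> x - V *v (P *v x) \<in> W"
    and permutes: "\<And>g. g \<in> Gs \<Longrightarrow> \<exists>R. g = (*v) R \<and> unit_columns_on K (P ** R ** V)"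
    and stable: "\<And>g x. g \<in> Gs \<Longrightarrow> x \<in> M \<Longrightarrow> g x \<in> M"
  shows "perm_basis Gs M W ((\<lambda>k. column k V) ` K)"
proof -
  let ?B = "(\<lambda>k. column k V) ` K"
  have spanning: "V *v y \<in> lincombs ?B" for y
  proof -
    have "V *v y = (\<Sum>k\<in>K. y $ k *s column k V)"
      using zero_outside by (rule matrix_vector_mult_sum_columns)
    then show ?thesis
      unfolding lincombs_eq_span
      by (simp add: vec_module.span_sum vec_module.span_scale vec_module.span_base)
  qed
  have independent: "c v = 0"
    if S: "S \<subseteq> ?B" and sum: "(\<Sum>v\<in>S. c v *s v) \<in> W" and v: "v \<in> S" for S c v
  proof -
    obtain j where j: "j \<in> K" "v = column j V"
      using S v by blast
    then have "c v = (P *v (\<Sum>v\<in>S. c v *s v)) $ j"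
      using dual_rows_coefficient[OF dual S j(1)] v by simp
    also have "\<dots> = 0"
      using coordinates_vanish[OF sum j(1)] .
    finally show ?thesis .
  qed
  have permuted: "\<exists>w\<in>?B. g v - w \<in> W" if g: "g \<in> Gs" and v: "v \<in> ?B" for g v
  proof -
    obtain k where k: "k \<in> K" "v = column k V"
      using v by blast
    obtain R where R: "g = (*v) R" and "unit_columns_on K (P ** R ** V)"
      using permutes[OF g] by blast
    then obtain l where "l \<in> K" and "V *v column k (P ** R ** V) = column l V"
      using matrix_vector_mult_unit_column[OF zero_outside _ k(1)] by blast
    moreover have "P *v g v = column k (P ** R ** V)"
      by (simp add: R k column_matrix_mult matrix_vector_mul_assoc)
    moreover have "g v \<in> M"
      using stable[OF g] columns k by blast
    ultimately show ?thesis
      using retraction by force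
  qed
  show ?thesis
    unfolding perm_basis_def
  proof (intro conjI)
    show "finite ?B" and "?B \<subseteq> M"
      using columns by auto
    show "\<forall>x\<in>M. \<exists>y\<in>lincombs ?B. x - y \<in> W"
      using retraction spanning by blast
    show "\<forall>S c. finite S \<and> S \<subseteq> ?B \<and> (\<Sum>v\<in>S. c v *s v) \<in> W \<longrightarrow> (\<forall>v\<in>S. c v = 0)"
      using independent by blast
    show "\<forall>g\<in>Gs. \<forall>v\<in>?B. \<exists>w\<in>?B. g v - w \<in> W"
      using permuted by blast
  qed
qed

(* vector places the entries of a list at the indices 1, 2, ... of the numeral type,
   so list position k is index k + 1. *)
definition index11 :: "nat \<Rightarrow> 11" where
  "index11 k = of_nat (Suc k)"

lemma less_11_cases:
  "(k::nat) < 11 \<longleftrightarrow> k = 0 \<or> k = 1 \<or> k = 2 \<or> k = 3 \<or> k = 4 \<or> k = 5 \<or> k = 6 \<or> k = 7 \<or> k = 8 \<or> k = 9 \<or> k = 10"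
  by presburger

lemma inj_on_index11: "inj_on index11 {..<11}"
  unfolding inj_on_def Ball_def lessThan_iff less_11_cases by (auto simp: index11_def)

lemma index11_eq_iff: "j < 11 \<Longrightarrow> k < 11 \<Longrightarrow> index11 j = index11 k \<longleftrightarrow> j = k"
  using inj_on_index11 by (auto dest: inj_onD)

lemma UNIV_11_eq_index11: "(UNIV :: 11 set) = index11 ` {..<11}"
  using inj_on_index11 by (intro card_subset_eq[symmetric]) (simp_all add: card_image)

lemma sum_UNIV_11: "sum f (UNIV :: 11 set) = (\<Sum>k<11. f (index11 k))"
  by (simp add: UNIV_11_eq_index11 sum.reindex[OF inj_on_index11])

lemma vector_nth_index11:
  assumes "length l = 11" and "k < 11"
  shows "(vector l :: 'a::zero ^ 11) $ index11 k = l ! k"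
proof -
  obtain a0 a1 a2 a3 a4 a5 a6 a7 a8 a9 a10 where "l = [a0, a1, a2, a3, a4, a5, a6, a7, a8, a9, a10]"
    using assms(1) by (simp add: numeral_eq_Suc length_Suc_conv) blast
  then show ?thesis
    using assms(2) unfolding less_11_cases by (elim disjE) (simp_all add: index11_def vector_def)
qed

lemma all_11: "(\<forall>i :: 11. P i) \<longleftrightarrow> (\<forall>k<11. P (index11 k))"
  using UNIV_11_eq_index11 by (metis UNIV_I imageE lessThan_iff)

lemma matrix_eq_index11:
  assumes "\<And>i j. i < 11 \<Longrightarrow> j < 11 \<Longrightarrow> (A :: 'a ^ 11 ^ 11) $ index11 i $ index11 j = B $ index11 i $ index11 j"
  shows "A = B"
  using assms unfolding vec_eq_iff all_11 by blast

definition is_lmat11 :: "int list list \<Rightarrow> bool" where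
  "is_lmat11 L \<longleftrightarrow> length L = 11 \<and> (\<forall>r\<in>set L. length r = 11)"

definition lmat_mult :: "int list list \<Rightarrow> int list list \<Rightarrow> int list list" where
  "lmat_mult L M = map (\<lambda>i. map (\<lambda>j. sum_list (map (\<lambda>k. L ! i ! k * M ! k ! j) [0..<11])) [0..<11]) [0..<11]"

definition lmat_add :: "int list list \<Rightarrow> int list list \<Rightarrow> int list list" where
  "lmat_add L M = map (\<lambda>i. map (\<lambda>j. L ! i ! j + M ! i ! j) [0..<11]) [0..<11]"

definition lmat_diff :: "int list list \<Rightarrow> int list list \<Rightarrow> int list list" where
  "lmat_diff L M = map (\<lambda>i. map (\<lambda>j. L ! i ! j - M ! i ! j) [0..<11]) [0..<11]"

definition lmat_scalar :: "int \<Rightarrow> int list list" where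
  "lmat_scalar c = map (\<lambda>i. map (\<lambda>j. if i = j then c else 0) [0..<11]) [0..<11]"

lemma is_lmat11_tabulate: "is_lmat11 (map (\<lambda>i. map (f i) [0..<11]) [0..<11])"
  by (simp add: is_lmat11_def)

lemma is_lmat11_Cons [simp]:
  "is_lmat11 (r # L) \<longleftrightarrow> length (r # L) = 11 \<and> (\<forall>s\<in>set (r # L). length s = 11)"
  by (simp only: is_lmat11_def)

lemma is_lmat11_ops [simp]:
  "is_lmat11 (lmat_mult L M)" "is_lmat11 (lmat_add L M)" "is_lmat11 (lmat_diff L M)"
  "is_lmat11 (lmat_scalar c)"
  by (simp_all only: lmat_mult_def lmat_add_def lmat_diff_def lmat_scalar_def is_lmat11_tabulate)

lemma intmat_nth:
  assumes "is_lmat11 L" and "i < 11" and "j < 11"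
  shows "(intmat L :: 'a::ring_1 ^ 11 ^ 11) $ index11 i $ index11 j = of_int (L ! i ! j)"
  using assms by (simp add: intmat_def is_lmat11_def vector_nth_index11)

lemma intmat_lmat_mult:
  assumes "is_lmat11 L" and "is_lmat11 M"
  shows "(intmat L :: 'a::ring_1 ^ 11 ^ 11) ** (intmat M :: 'a ^ 11 ^ 11) = intmat (lmat_mult L M)"
proof (rule matrix_eq_index11)
  fix i j :: nat
  assume ij: "i < 11" "j < 11"
  have "((intmat L :: 'a ^ 11 ^ 11) ** (intmat M :: 'a ^ 11 ^ 11)) $ index11 i $ index11 j
      = (\<Sum>k<11. of_int (L ! i ! k) * of_int (M ! k ! j))"
    unfolding matrix_matrix_mult_def vec_lambda_beta sum_UNIV_11
    by (rule sum.cong) (simp_all add: intmat_nth assms ij)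
  also have "\<dots> = intmat (lmat_mult L M) $ index11 i $ index11 j"
    using ij by (simp add: intmat_nth, simp add: lmat_mult_def sum_list_sum_nth atLeast0LessThan)
  finally show "((intmat L :: 'a ^ 11 ^ 11) ** (intmat M :: 'a ^ 11 ^ 11)) $ index11 i $ index11 j
      = intmat (lmat_mult L M) $ index11 i $ index11 j" .
qed

lemma intmat_lmat_add:
  "is_lmat11 L \<Longrightarrow> is_lmat11 M \<Longrightarrow> (intmat L + intmat M :: 'a::ring_1 ^ 11 ^ 11) = intmat (lmat_add L M)"
  by (rule matrix_eq_index11) (simp add: intmat_nth, simp add: lmat_add_def)

lemma intmat_lmat_diff:
  "is_lmat11 L \<Longrightarrow> is_lmat11 M \<Longrightarrow> (intmat L - intmat M :: 'a::ring_1 ^ 11 ^ 11) = intmat (lmat_diff L M)"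
  by (rule matrix_eq_index11) (simp add: intmat_nth, simp add: lmat_diff_def)

lemma intmat_lmat_scalar: "(intmat (lmat_scalar c) :: 'a::ring_1 ^ 11 ^ 11) = mat (of_int c)"
  by (rule matrix_eq_index11) (simp add: intmat_nth mat_def index11_eq_iff, simp add: lmat_scalar_def)

lemma mat_one_eq_intmat: "mat 1 = (intmat (lmat_scalar 1) :: 'a::ring_1 ^ 11 ^ 11)"
  by (simp add: intmat_lmat_scalar)

lemma mat_numeral_eq_intmat: "mat (numeral n) = (intmat (lmat_scalar (numeral n)) :: 'a::ring_1 ^ 11 ^ 11)"
  by (simp add: intmat_lmat_scalar)

definition lmat_zero_columns_from :: "int list list \<Rightarrow> nat \<Rightarrow> bool" where
  "lmat_zero_columns_from X m \<longleftrightarrow> list_all (\<lambda>r. list_all (\<lambda>k. r ! k = 0) [m..<11]) X"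

definition lmat_identity_block :: "int list list \<Rightarrow> nat \<Rightarrow> bool" where
  "lmat_identity_block X m \<longleftrightarrow>
     list_all (\<lambda>j. list_all (\<lambda>k. X ! j ! k = (if j = k then 1 else 0)) [0..<m]) [0..<m]"

definition lmat_unit_columns :: "int list list \<Rightarrow> nat \<Rightarrow> bool" where
  "lmat_unit_columns X m \<longleftrightarrow>
     list_all (\<lambda>k. list_ex (\<lambda>l. list_all (\<lambda>j. X ! j ! k = (if j = l then 1 else 0)) [0..<m]) [0..<m]) [0..<m]"

lemma intmat_zero_columns:
  assumes "is_lmat11 X" and "lmat_zero_columns_from X m" and "k \<notin> index11 ` {..<m}"
  shows "(intmat X :: 'a::ring_1 ^ 11 ^ 11) $ i $ k = 0"
proof -
  obtain i' k' where "i' < 11" "k' < 11" "i = index11 i'" "k = index11 k'"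
    using UNIV_11_eq_index11 by blast
  moreover have "m \<le> k'"
    using calculation assms(3) by (metis imageI lessThan_iff not_le)
  ultimately show ?thesis
    using assms(1,2) by (auto simp: intmat_nth lmat_zero_columns_from_def list_all_iff is_lmat11_def)
qed

lemma intmat_identity_block:
  assumes "is_lmat11 X" and "lmat_identity_block X m" and "m \<le> 11"
    and "j \<in> index11 ` {..<m}" and "k \<in> index11 ` {..<m}"
  shows "(intmat X :: 'a::ring_1 ^ 11 ^ 11) $ j $ k = (if j = k then 1 else 0)"
  using assms by (auto simp: intmat_nth index11_eq_iff lmat_identity_block_def list_all_iff)

lemma intmat_unit_columns:
  assumes "is_lmat11 X" and "lmat_unit_columns X m" and "m \<le> 11"
  shows "unit_columns_on (index11 ` {..<m}) (intmat X :: 'a::ring_1 ^ 11 ^ 11)"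
  unfolding unit_columns_on_def
proof
  fix k
  assume "k \<in> index11 ` {..<m}"
  then obtain k' where k': "k' < m" "k = index11 k'"
    by blast
  then obtain l' where l': "l' < m" "\<And>j'. j' < m \<Longrightarrow> X ! j' ! k' = (if j' = l' then 1 else 0)"
    using assms(2) unfolding lmat_unit_columns_def list_all_iff list_ex_iff by force
  have "\<forall>j\<in>index11 ` {..<m}. (intmat X :: 'a ^ 11 ^ 11) $ j $ k = (if j = index11 l' then 1 else 0)"
    using k' l' assms(1,3) by (auto simp: intmat_nth index11_eq_iff)
  then show "\<exists>l\<in>index11 ` {..<m}. \<forall>j\<in>index11 ` {..<m}. (intmat X :: 'a ^ 11 ^ 11) $ j $ k = (if j = l then 1 else 0)"
    using l'(1) by blast
qed

lemma generator_relations: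
  "A_n ** A_n = mat 1 \<and> A_b ** A_b = mat 1 \<and> A_c ** A_c = mat 1 \<and>
   A_n ** A_b = A_b ** A_n \<and> A_n ** A_c = A_c ** A_n \<and> A_b ** A_c = A_c ** A_b"
  unfolding A_n_def A_b_def A_c_def mat_one_eq_intmat
  by (simp add: intmat_lmat_mult, intro conjI arg_cong[where f = intmat]; code_simp)

abbreviation zmat :: "int list list \<Rightarrow> padic2 ^ 11 ^ 11" where
  "zmat \<equiv> intmat"

definition G_matrices :: "(padic2 ^ 11 ^ 11) set" where
  "G_matrices = {mat 1, A_n, A_b, A_c, A_n ** A_b, A_n ** A_c, A_b ** A_c, A_n ** A_b ** A_c}"

lemma G_action_eq_image: "G_action = (*v) ` G_matrices"
proof -
  have "range rho = G_matrices"
  proof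
    show "range rho \<subseteq> G_matrices"
      by (auto simp: rho_def G_matrices_def)
    have "G_matrices = rho ` {(False, False, False), (True, False, False), (False, True, False),
        (False, False, True), (True, True, False), (True, False, True), (False, True, True), (True, True, True)}"
      by (simp add: G_matrices_def rho_def)
    also have "\<dots> \<subseteq> range rho"
      by (rule image_mono) simp
    finally show "G_matrices \<subseteq> range rho" .
  qed
  moreover have "G_action = (*v) ` range rho"
    unfolding G_action_def by auto
  ultimately show ?thesis
    by simp
qed

lemma A_n_commutes_G_matrices: "R \<in> G_matrices \<Longrightarrow> A_n ** R = R ** A_n"
  using generator_relations unfolding G_matrices_def by (auto intro!: matrix_mult_commute_product)

lemma G_action_U_fixed_N:
  assumes "g \<in> G_action" and "x \<in> U_fixed_N"
  shows "g x \<in> U_fixed_N"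
proof -
  obtain R where "R \<in> G_matrices" and g: "g = (*v) R"
    using assms(1) by (auto simp: G_action_eq_image)
  then have "A_n *v g x = R *v (A_n *v x)"
    by (simp add: matrix_vector_mul_assoc A_n_commutes_G_matrices)
  then show ?thesis
    using assms(2) by (simp add: U_fixed_N_def g)
qed

(* Columns 0-6 of fix_basis form the permutation basis of U^N and rows 0-6 of fix_coords
   are the coordinate functionals; the remaining columns and rows are zero. Likewise for
   U modulo (1 - n)U with the cofix matrices. *)
definition fix_basis :: "int list list" where
  "fix_basis =
    [[0,0,0,1,1,1,1,0,0,0,0],
     [0,0,-2,0,0,0,0,0,0,0,0],
     [-2,0,-2,0,0,0,0,0,0,0,0],
     [0,2,0,0,0,0,0,0,0,0,0],
     [0,1,-1,0,0,1,0,0,0,0,0],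
     [1,0,-1,0,1,0,0,0,0,0,0],
     [-1,-1,0,1,0,0,0,0,0,0,0],
     [0,0,1,0,0,0,0,0,0,0,0],
     [1,1,1,0,0,0,0,0,0,0,0],
     [-1,0,0,0,0,0,0,0,0,0,0],
     [0,-1,0,0,0,0,0,0,0,0,0]]"

definition fix_coords :: "int list list" where
  "fix_coords =
    [[0,0,0,0,0,0,0,0,0,-1,0],
     [0,0,0,0,0,0,0,-1,1,1,0],
     [0,0,0,0,0,0,0,1,0,0,0],
     [0,0,0,0,0,0,1,-1,1,0,0],
     [0,0,0,0,0,1,0,1,0,1,0],
     [0,0,0,0,1,0,0,2,-1,-1,0],
     [1,0,0,0,-1,-1,-1,-2,0,0,0],
     [0,0,0,0,0,0,0,0,0,0,0],
     [0,0,0,0,0,0,0,0,0,0,0],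
     [0,0,0,0,0,0,0,0,0,0,0],
     [0,0,0,0,0,0,0,0,0,0,0]]"

definition fix_homotopy :: "int list list" where
  "fix_homotopy =
    [[0,0,0,0,0,0,0,0,0,0,0],
     [0,0,0,0,0,0,0,1,0,0,0],
     [0,0,0,0,0,0,0,1,0,-1,0],
     [0,0,0,0,0,0,0,1,-1,-1,0],
     [0,0,0,0,0,0,0,0,0,0,0],
     [0,0,0,0,0,0,0,0,0,0,0],
     [0,0,0,0,0,0,0,0,0,0,0],
     [0,0,0,0,0,0,0,0,0,0,0],
     [0,0,0,0,0,0,0,0,0,0,0],
     [0,0,0,0,0,0,0,0,0,0,0],
     [0,0,0,0,-1,0,0,-1,0,0,0]]"

lemma is_lmat11_fix_certificate [simp]:
  "is_lmat11 fix_basis" "is_lmat11 fix_coords" "is_lmat11 fix_homotopy"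
  by code_simp+

lemma fix_basis_zero_columns: "lmat_zero_columns_from fix_basis 7"
  by code_simp

lemma fix_coords_dual: "lmat_identity_block (lmat_mult fix_coords fix_basis) 7"
  by code_simp

lemma A_n_fix_basis: "A_n ** zmat fix_basis = zmat fix_basis"
  unfolding A_n_def by (simp add: intmat_lmat_mult, rule arg_cong[where f = intmat], code_simp)

lemma fix_retraction: "zmat fix_basis ** zmat fix_coords + zmat fix_homotopy = mat 1 + zmat fix_homotopy ** A_n"
  unfolding A_n_def mat_one_eq_intmat
  by (simp add: intmat_lmat_mult intmat_lmat_add, rule arg_cong[where f = intmat], code_simp)

lemma fix_coords_unit_columns:
  "\<forall>R\<in>G_matrices. unit_columns_on (index11 ` {..<7}) (zmat fix_coords ** R ** zmat fix_basis)"
  unfolding G_matrices_def A_n_def A_b_def A_c_def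
  by (simp add: intmat_lmat_mult, intro conjI intmat_unit_columns; code_simp)

lemma is_perm_module_U_fixed_N: "is_perm_module G_action U_fixed_N {0}"
proof -
  let ?K = "index11 ` {..<7}" and ?V = "zmat fix_basis" and ?P = "zmat fix_coords"
  have "perm_basis G_action U_fixed_N {0} ((\<lambda>k. column k ?V) ` ?K)"
  proof (rule perm_basis_of_certificate)
    show "?V $ i $ k = 0" if "k \<notin> ?K" for i k
      using that fix_basis_zero_columns by (simp add: intmat_zero_columns)
    show "(?P ** ?V) $ j $ k = (if j = k then 1 else 0)" if "j \<in> ?K" "k \<in> ?K" for j k
      using that fix_coords_dual by (simp add: intmat_lmat_mult intmat_identity_block)
    show "column k ?V \<in> U_fixed_N" for k
      by (simp add: U_fixed_N_def A_n_fix_basis flip: column_matrix_mult)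
    show "(?P *v w) $ j = 0" if "w \<in> {0}" for w j
      using that by simp
    show "x - ?V *v (?P *v x) \<in> {0}" if "x \<in> U_fixed_N" for x
    proof -
      have "(?V ** ?P + zmat fix_homotopy) *v x = (mat 1 + zmat fix_homotopy ** A_n) *v x"
        by (simp only: fix_retraction)
      then show ?thesis
        using that by (simp add: U_fixed_N_def matrix_vector_mult_add_rdistrib flip: matrix_vector_mul_assoc)
    qed
    show "\<exists>R. g = (*v) R \<and> unit_columns_on ?K (?P ** R ** ?V)" if "g \<in> G_action" for g
      using that fix_coords_unit_columns by (auto simp: G_action_eq_image)
    show "g x \<in> U_fixed_N" if "g \<in> G_action" and "x \<in> U_fixed_N" for g x
      using that by (rule G_action_U_fixed_N)
  qed
  then show ?thesis
    unfolding is_perm_module_def by blast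
qed

definition cofix_basis :: "int list list" where
  "cofix_basis =
    [[0,1,1,1,1,1,1,0,0,0,0],
     [1,0,0,1,1,1,1,0,0,0,0],
     [0,-1,-1,1,1,0,0,0,0,0,0],
     [1,-1,-1,-1,-1,0,0,0,0,0,0],
     [0,0,0,1,1,0,1,0,0,0,0],
     [0,1,1,1,2,1,1,0,0,0,0],
     [0,0,0,0,0,0,0,0,0,0,0],
     [1,-1,0,-2,-3,0,-1,0,0,0,0],
     [0,0,0,0,0,0,0,0,0,0,0],
     [0,0,0,0,0,0,0,0,0,0,0],
     [0,0,0,0,0,0,0,0,0,0,0]]"

definition cofix_coords :: "int list list" where
  "cofix_coords =
    [[-2,2,-1,-1,0,0,0,0,0,0,0],
     [0,1,-1,0,-1,-1,0,-1,-1,-1,-1],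
     [-1,0,0,-1,1,1,0,1,1,1,1],
     [0,1,0,-1,0,-1,-1,0,0,0,0],
     [-1,0,0,0,0,1,1,0,0,0,0],
     [2,-1,1,1,-1,0,-1,0,0,0,0],
     [1,-1,0,1,1,0,1,0,0,0,0],
     [0,0,0,0,0,0,0,0,0,0,0],
     [0,0,0,0,0,0,0,0,0,0,0],
     [0,0,0,0,0,0,0,0,0,0,0],
     [0,0,0,0,0,0,0,0,0,0,0]]"

definition cofix_homotopy :: "int list list" where
  "cofix_homotopy =
    [[0,0,0,0,0,0,0,0,0,0,0],
     [0,0,0,0,0,0,0,0,1,1,1],
     [0,0,0,0,0,0,0,0,1,0,1],
     [0,0,0,0,0,0,0,0,0,0,1],
     [0,0,0,0,0,0,0,0,0,0,0],
     [0,0,0,0,0,0,0,0,0,0,0],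
     [0,0,0,0,0,0,0,0,0,0,0],
     [0,0,0,0,0,0,1,0,-1,-1,-1],
     [0,0,0,0,0,0,0,0,0,0,0],
     [0,0,0,0,0,0,0,0,0,0,0],
     [0,0,0,0,0,0,0,0,0,0,0]]"

lemma is_lmat11_cofix_certificate [simp]:
  "is_lmat11 cofix_basis" "is_lmat11 cofix_coords" "is_lmat11 cofix_homotopy"
  by code_simp+

lemma cofix_basis_zero_columns: "lmat_zero_columns_from cofix_basis 7"
  by code_simp

lemma cofix_coords_dual: "lmat_identity_block (lmat_mult cofix_coords cofix_basis) 7"
  by code_simp

lemma cofix_coords_A_n: "zmat cofix_coords ** A_n = zmat cofix_coords"
  unfolding A_n_def by (simp add: intmat_lmat_mult, rule arg_cong[where f = intmat], code_simp)

lemma cofix_retraction: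
  "mat 1 + A_n ** zmat cofix_homotopy = zmat cofix_basis ** zmat cofix_coords + zmat cofix_homotopy"
  unfolding A_n_def mat_one_eq_intmat
  by (simp add: intmat_lmat_mult intmat_lmat_add, rule arg_cong[where f = intmat], code_simp)

lemma cofix_coords_unit_columns:
  "\<forall>R\<in>G_matrices. unit_columns_on (index11 ` {..<7}) (zmat cofix_coords ** R ** zmat cofix_basis)"
  unfolding G_matrices_def A_n_def A_b_def A_c_def
  by (simp add: intmat_lmat_mult, intro conjI intmat_unit_columns; code_simp)

lemma is_perm_module_mod_IN_U: "is_perm_module G_action UNIV IN_U"
proof -
  let ?K = "index11 ` {..<7}" and ?V = "zmat cofix_basis" and ?P = "zmat cofix_coords"
  have "perm_basis G_action UNIV IN_U ((\<lambda>k. column k ?V) ` ?K)"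
  proof (rule perm_basis_of_certificate)
    show "?V $ i $ k = 0" if "k \<notin> ?K" for i k
      using that cofix_basis_zero_columns by (simp add: intmat_zero_columns)
    show "(?P ** ?V) $ j $ k = (if j = k then 1 else 0)" if "j \<in> ?K" "k \<in> ?K" for j k
      using that cofix_coords_dual by (simp add: intmat_lmat_mult intmat_identity_block)
    show "column k ?V \<in> UNIV" for k
      by simp
    show "(?P *v w) $ j = 0" if "w \<in> IN_U" for w j
      using that by (auto simp: IN_U_def matrix_vector_mult_diff_distrib matrix_vector_mul_assoc cofix_coords_A_n)
    show "x - ?V *v (?P *v x) \<in> IN_U" for x
    proof -
      have "(mat 1 + A_n ** zmat cofix_homotopy) *v x = (?V ** ?P + zmat cofix_homotopy) *v x"
        by (simp only: cofix_retraction)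
      then have "x - ?V *v (?P *v x) = zmat cofix_homotopy *v x - A_n *v (zmat cofix_homotopy *v x)"
        by (simp add: matrix_vector_mult_add_rdistrib matrix_vector_mul_assoc algebra_simps)
      then show ?thesis
        unfolding IN_U_def by blast
    qed
    show "\<exists>R. g = (*v) R \<and> unit_columns_on ?K (?P ** R ** ?V)" if "g \<in> G_action" for g
      using that cofix_coords_unit_columns by (auto simp: G_action_eq_image)
    show "g x \<in> UNIV" for g x
      by simp
  qed
  then show ?thesis
    unfolding is_perm_module_def by blast
qed

definition norm_preimage :: "int list list" where
  "norm_preimage =
    [[0,0,0,0,2,-2,2,0,0,-4,0],
     [0,0,0,0,-1,2,-1,0,0,3,0],
     [0,0,0,0,-1,2,-1,0,0,4,0],
     [0,0,0,0,1,-1,0,0,0,-1,0],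
     [0,0,0,0,0,0,0,0,0,0,0],
     [0,0,0,0,0,0,0,0,0,0,0],
     [0,0,0,0,0,0,0,0,0,0,0],
     [0,0,0,0,0,0,0,0,0,0,0],
     [0,0,0,0,0,0,0,0,0,0,0],
     [0,0,0,0,0,0,0,0,0,0,0],
     [0,0,0,0,0,0,0,0,0,0,0]]"

definition norm_correction_n :: "int list list" where
  "norm_correction_n =
    [[0,0,0,0,16,0,0,4,8,12,0],
     [0,0,0,0,-16,0,0,-4,-8,-8,0],
     [0,0,0,0,-16,0,0,-4,-8,-12,0],
     [0,0,0,0,8,0,0,4,4,4,0],
     [0,0,0,0,0,0,0,0,0,0,0],
     [0,0,0,0,0,0,0,0,0,0,0],
     [0,0,0,0,0,0,0,0,0,0,0],
     [0,0,0,0,8,0,0,4,4,4,0],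
     [0,0,0,0,12,0,0,4,8,8,0],
     [0,0,0,0,0,0,0,0,0,0,0],
     [0,0,0,0,-8,0,0,-4,-4,-4,0]]"

definition norm_correction_b :: "int list list" where
  "norm_correction_b =
    [[0,0,0,0,-20,0,-4,0,0,0,0],
     [0,0,0,0,16,0,0,0,0,0,0],
     [0,0,0,0,16,0,0,0,0,0,0],
     [0,0,0,0,-8,0,0,0,0,0,0],
     [0,0,0,0,0,0,0,0,0,0,0],
     [0,0,0,0,0,0,0,0,0,0,0],
     [0,0,0,0,0,0,0,0,0,0,0],
     [0,0,0,0,-8,0,0,0,0,0,0],
     [0,0,0,0,-12,0,0,0,0,0,0],
     [0,0,0,0,0,0,0,0,0,0,0],
     [0,0,0,0,4,0,0,0,0,0,0]]"

definition norm_correction_c :: "int list list" where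
  "norm_correction_c =
    [[0,0,0,0,8,0,0,0,0,0,0],
     [0,0,0,0,-8,0,0,0,0,0,0],
     [0,0,0,0,-8,0,0,0,0,0,0],
     [0,0,0,0,0,0,0,0,0,0,0],
     [0,0,0,0,0,0,0,0,0,0,0],
     [0,0,0,0,0,0,0,0,0,0,0],
     [0,0,0,0,0,0,0,0,0,0,0],
     [0,0,0,0,4,0,0,0,0,0,0],
     [0,0,0,0,4,0,0,0,0,0,0],
     [0,0,0,0,0,0,0,0,0,0,0],
     [0,0,0,0,0,0,0,0,0,0,0]]"

lemma is_lmat11_norm_certificate [simp]:
  "is_lmat11 norm_preimage" "is_lmat11 norm_correction_n" "is_lmat11 norm_correction_b"
  "is_lmat11 norm_correction_c"
  by code_simp+

lemma norm_certificate:
  "(mat 1 + A_n) ** (mat 1 + A_b) ** (mat 1 + A_c) ** zmat norm_preimage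
     = mat 4 + zmat norm_correction_n ** (A_n - mat 1) + zmat norm_correction_b ** (A_b - mat 1)
         + zmat norm_correction_c ** (A_c - mat 1)"
  unfolding A_n_def A_b_def A_c_def mat_one_eq_intmat mat_numeral_eq_intmat
  by (simp add: intmat_lmat_mult intmat_lmat_add intmat_lmat_diff, rule arg_cong[where f = intmat], code_simp)

lemma perm_basis_generator_bij:
  assumes "perm_basis G_action UNIV {0} B" and "A \<in> {A_n, A_b, A_c}"
  shows "bij_betw ((*v) A) B B"
proof (rule bij_betw_byWitness[where f' = "(*v) A"])
  have "(*v) A \<in> G_action"
    using assms(2) by (auto simp: G_action_eq_image G_matrices_def)
  then show "(*v) A ` B \<subseteq> B" and "(*v) A ` B \<subseteq> B"
    using perm_basis_zeroD(4)[OF assms(1)] by auto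
  have "A ** A = mat 1"
    using assms(2) generator_relations by auto
  then show "\<forall>v\<in>B. A *v (A *v v) = v" and "\<forall>v\<in>B. A *v (A *v v) = v"
    by (simp_all add: matrix_vector_mul_assoc)
qed

lemma perm_basis_fixed_vector:
  assumes "perm_basis G_action UNIV {0} B"
  obtains x0 where "x0 \<in> B" and "\<And>A. A \<in> {A_n, A_b, A_c} \<Longrightarrow> A *v x0 = x0"
proof -
  note basis = perm_basis_zeroD(1-3)[OF assms]
  have "of_nat (card B) = (of_nat 11 :: padic2)"
    using of_nat_card_basis[OF basis] by simp
  then have "odd (card B)"
    by (simp only: of_nat_eq_iff) simp
  note bij = perm_basis_generator_bij[OF assms]
  define X where "X = {x\<in>B. \<forall>f\<in>(*v) ` {A_n, A_b, A_c}. f x = x}"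
  have "odd (card X)"
    unfolding X_def
  proof (rule odd_card_common_fixpoints)
    show "finite ((*v) ` {A_n, A_b, A_c})" and "finite B" and "odd (card B)"
      using basis(1) \<open>odd (card B)\<close> by simp_all
    show "f x \<in> B" if "f \<in> (*v) ` {A_n, A_b, A_c}" "x \<in> B" for f x
      using that bij by (auto intro: bij_betw_apply)
    show "f (f x) = x" if "f \<in> (*v) ` {A_n, A_b, A_c}" for f x
      using that generator_relations by (auto simp: matrix_vector_mul_assoc)
    show "f (g x) = g (f x)" if "f \<in> (*v) ` {A_n, A_b, A_c}" "g \<in> (*v) ` {A_n, A_b, A_c}" for f g x
      using that generator_relations by (auto simp: matrix_vector_mul_assoc)
  qed
  then have "X \<noteq> {}"
    by (intro notI) simp
  then obtain x0 where "x0 \<in> X"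
    by blast
  then show ?thesis
    using that unfolding X_def by blast
qed

lemma norm_of_fixed_vector:
  assumes "\<And>A. A \<in> {A_n, A_b, A_c} \<Longrightarrow> A *v x0 = x0"
  shows "(mat 1 + A_n) *v ((mat 1 + A_b) *v ((mat 1 + A_c) *v (zmat norm_preimage *v x0))) = 4 *s x0"
proof -
  have kernel: "(A - mat 1) *v x0 = 0" if "A \<in> {A_n, A_b, A_c}" for A
    by (simp add: matrix_vector_mult_diff_rdistrib assms[OF that])
  have "(mat 1 + A_n) *v ((mat 1 + A_b) *v ((mat 1 + A_c) *v (zmat norm_preimage *v x0)))
      = ((mat 1 + A_n) ** (mat 1 + A_b) ** (mat 1 + A_c) ** zmat norm_preimage) *v x0"
    by (simp only: matrix_vector_mul_assoc matrix_mul_assoc)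
  also have "\<dots> = (mat 4 + zmat norm_correction_n ** (A_n - mat 1) + zmat norm_correction_b ** (A_b - mat 1)
      + zmat norm_correction_c ** (A_c - mat 1)) *v x0"
    by (simp only: norm_certificate)
  also have "\<dots> = 4 *s x0"
    by (simp add: matrix_vector_mult_add_rdistrib kernel mat_vector_mult flip: matrix_vector_mul_assoc)
  finally show ?thesis .
qed

lemma perm_basis_norm_coordinate:
  assumes B: "perm_basis G_action UNIV {0} B"
    and x0: "x0 \<in> B" and fixed: "\<And>A. A \<in> {A_n, A_b, A_c} \<Longrightarrow> A *v x0 = x0"
  shows "vec_module.representation B ((mat 1 + A_n) *v ((mat 1 + A_b) *v ((mat 1 + A_c) *v z))) x0
    = 8 * vec_module.representation B z x0"
proof -
  note basis = perm_basis_zeroD(1-3)[OF B]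
  let ?r = "\<lambda>z. vec_module.representation B z x0"
  have doubling: "?r ((mat 1 + A) *v z) = 2 * ?r z" if "A \<in> {A_n, A_b, A_c}" for A z
  proof -
    have "?r (A *v z) = ?r z"
      using representation_matrix_vector_mult[OF basis perm_basis_generator_bij[OF B that] x0]
      by (simp add: fixed[OF that])
    have "?r ((mat 1 + A) *v z) = ?r z + ?r (A *v z)"
      by (simp add: matrix_vector_mult_add_rdistrib vec_module.representation_add basis)
    also have "\<dots> = 2 * ?r z"
      using \<open>?r (A *v z) = ?r z\<close> by (simp only: mult_2)
    finally show ?thesis .
  qed
  then show ?thesis
    by simp
qed

lemma not_is_perm_module_U: "\<not> is_perm_module G_action UNIV {0}"
proof
  assume "is_perm_module G_action UNIV {0}"
  then obtain B where B: "perm_basis G_action UNIV {0} B"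
    unfolding is_perm_module_def by blast
  obtain x0 where x0: "x0 \<in> B" and fixed: "\<And>A. A \<in> {A_n, A_b, A_c} \<Longrightarrow> A *v x0 = x0"
    using perm_basis_fixed_vector[OF B] by blast
  let ?r = "\<lambda>z. vec_module.representation B z x0" and ?y = "zmat norm_preimage *v x0"
  have "8 * ?r ?y = ?r (4 *s x0)"
    using perm_basis_norm_coordinate[OF B x0 fixed] norm_of_fixed_vector[OF fixed] by metis
  also have "\<dots> = 4"
    using perm_basis_zeroD(1-3)[OF B] x0
    by (simp add: vec_module.representation_scale vec_module.representation_basis)
  finally have "of_int (2 ^ 3) dvd (of_int 4 :: padic2)"
    unfolding dvd_def by (intro exI[of _ "?r ?y"]) simp
  then have "(2::int) ^ 3 dvd 4"
    by (rule padic2_pow2_dvd_of_int)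
  then show False
    by simp
qed

theorem mainTheorem12:
  shows "A_n ** A_n = mat 1 \<and> A_b ** A_b = mat 1 \<and> A_c ** A_c = mat 1 \<and>
         A_n ** A_b = A_b ** A_n \<and> A_n ** A_c = A_c ** A_n \<and> A_b ** A_c = A_c ** A_b \<and>
         is_perm_module G_action U_fixed_N {0} \<and>
         is_perm_module G_action UNIV IN_U \<and>
         \<not> is_perm_module G_action UNIV {0}"
  using generator_relations is_perm_module_U_fixed_N is_perm_module_mod_IN_U not_is_perm_module_U
  by blast

end
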